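(* Let $\mathcal{M}$ be a matroid on $[n]$, $J=J(\mathcal{M})$, and let $v$ be such that $\{v\}$ is independent in $\mathcal{M}$. Let $J\div v$ be the ideal generated by $G(J)-G(J(\mathcal{M}/v))$. Then $$G(J(\mathcal{M}/v))=\{N\in G(J): x_v\nmid N\}\quad\text{and}\quad G(J\div v)=\{N\in G(J):x_v\mid N\}.$$ Furthermore, for every independent set $A$ of $\mathcal{M}$, $G(J(\mathcal{M}/A))=\{N\in G(J):\operatorname{supp}N\cap A=\emptyset\}$.
   Context: $R=\mathbb{K}[x_1,\ldots,x_n]$, $\mathbb{K}$ a field. For a matroid $\mathcal{N}$ on $E\subseteq[n]$, $J(\mathcal{N})=\bigcap_{F\in\mathcal{B}(\mathcal{N})}(x_i:i\in F)$ formed in $\mathbb{K}[x_i:i\in E]$ and extended to $R$. $\mathcal{M}/A$ is the contraction by the independent set $A$ (matroid on $[n]-A$ whose independent sets are the $I$ with $I\cup A$ independent). $G(\cdot)$ denotes minimal monomial generators; $\operatorname{supp}N=\{i:x_i\mid N\}$. *)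

theory Defs
  imports Main "HOL-Library.Poly_Mapping"
begin

definition matroid :: "nat set \<Rightarrow> nat set set \<Rightarrow> bool" where
  "matroid E Ind \<longleftrightarrow> finite E \<and> {} \<in> Ind \<and> (\<forall>X\<in>Ind. X \<subseteq> E)
     \<and> (\<forall>X Y. X \<in> Ind \<and> Y \<subseteq> X \<longrightarrow> Y \<in> Ind)
     \<and> (\<forall>X\<in>Ind. \<forall>Y\<in>Ind. card X < card Y \<longrightarrow> (\<exists>y\<in>Y - X. insert y X \<in> Ind))"

definition bases :: "nat set set \<Rightarrow> nat set set" where
  "bases Ind = {B \<in> Ind. \<forall>X\<in>Ind. B \<subseteq> X \<longrightarrow> X = B}"

definition contr_ground :: "nat set \<Rightarrow> nat set \<Rightarrow> nat set" where
  "contr_ground E A = E - A"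

definition contr_indep :: "nat set \<Rightarrow> nat set set \<Rightarrow> nat set \<Rightarrow> nat set set" where
  "contr_indep E Ind A = {X. X \<subseteq> E - A \<and> X \<union> A \<in> Ind}"

type_synonym 'k mpoly = "(nat \<Rightarrow>\<^sub>0 nat) \<Rightarrow>\<^sub>0 'k"

definition xmon :: "(nat \<Rightarrow>\<^sub>0 nat) \<Rightarrow> 'k::field mpoly" where
  "xmon \<alpha> = Poly_Mapping.single \<alpha> 1"

definition xvar :: "nat \<Rightarrow> 'k::field mpoly" where
  "xvar i = xmon (Poly_Mapping.single i 1)"

definition polys :: "nat set \<Rightarrow> 'k::field mpoly set" where
  "polys V = {p :: 'k mpoly. \<forall>\<alpha>\<in>Poly_Mapping.keys p. Poly_Mapping.keys (\<alpha> :: nat \<Rightarrow>\<^sub>0 nat) \<subseteq> V}"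

definition gen_ideal :: "nat set \<Rightarrow> 'k::field mpoly set \<Rightarrow> 'k mpoly set" where
  "gen_ideal V S = {(\<Sum>s\<in>T. c s * s) | c T. finite T \<and> T \<subseteq> S \<and> (\<forall>s\<in>T. c s \<in> polys V)}"

(* J(N) for the matroid N = (E, Ind): intersection over bases F of (x_i : i \<in> F), formed in
   K[x_i : i \<in> E] and then extended to R = K[x_1,...,x_n] *)
definition Jideal :: "nat \<Rightarrow> nat set \<Rightarrow> nat set set \<Rightarrow> 'k::field mpoly set" where
  "Jideal n E Ind = gen_ideal {1..n} (\<Inter>F\<in>bases Ind. gen_ideal E (xvar ` F))"

definition mdvd :: "(nat \<Rightarrow>\<^sub>0 nat) \<Rightarrow> (nat \<Rightarrow>\<^sub>0 nat) \<Rightarrow> bool" where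
  "mdvd \<beta> \<alpha> \<longleftrightarrow> (\<forall>i. Poly_Mapping.lookup \<beta> i \<le> Poly_Mapping.lookup \<alpha> i)"

(* G(I): minimal monomial generators of a monomial ideal I, given by exponent vectors *)
definition mingens :: "'k::field mpoly set \<Rightarrow> (nat \<Rightarrow>\<^sub>0 nat) set" where
  "mingens I = {\<alpha>. xmon \<alpha> \<in> I \<and> (\<forall>\<beta>. xmon \<beta> \<in> I \<and> mdvd \<beta> \<alpha> \<longrightarrow> \<beta> = \<alpha>)}"

end

theory Submission
  imports Defs
begin

(* A monomial lies in J(M) exactly when its support meets every basis of M. The bases of M/A are
   the sets B - A for bases B of M containing A, and by the exchange property every basis of M
   contains such a set B - A; hence X meets every basis of M/A iff X - A meets every basis of M.
   A minimal generator of J(M/A) therefore avoids A (deleting its A-part keeps it in the ideal),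
   and for monomials avoiding A the two membership conditions coincide. Finally, J div v is
   generated by an antichain of monomials, which is its own set of minimal generators. *)

section \<open>Monomial ideals\<close>

lemma keys_xmon [simp]: "Poly_Mapping.keys (xmon a :: 'k::field mpoly) = {a}"
  by (simp add: xmon_def)

lemma xmon_mult: "(xmon a :: 'k::field mpoly) * xmon b = xmon (a + b)"
  by (simp add: xmon_def mult_single)

lemma keys_add_nat: "Poly_Mapping.keys (a + b :: 'a \<Rightarrow>\<^sub>0 nat) = Poly_Mapping.keys a \<union> Poly_Mapping.keys b"
  by (auto simp: in_keys_iff lookup_add)

lemma mdvd_refl [simp]: "mdvd a a"
  by (simp add: mdvd_def)

lemma mdvd_trans: "mdvd a b \<Longrightarrow> mdvd b c \<Longrightarrow> mdvd a c"
  by (auto simp: mdvd_def intro: le_trans)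

lemma mdvd_antisym: "mdvd a b \<Longrightarrow> mdvd b a \<Longrightarrow> a = b"
  by (auto simp: mdvd_def intro!: poly_mapping_eqI intro: le_antisym)

lemma mdvd_add_left: "mdvd b (c + b)"
  by (simp add: mdvd_def lookup_add)

lemma keys_subset_of_mdvd: "mdvd b a \<Longrightarrow> Poly_Mapping.keys b \<subseteq> Poly_Mapping.keys a"
  by (auto simp: mdvd_def in_keys_iff) (meson order_less_le_trans)

lemma mdvd_single_1_iff: "mdvd (Poly_Mapping.single i 1) a \<longleftrightarrow> i \<in> Poly_Mapping.keys a"
  by (auto simp: mdvd_def lookup_single when_def in_keys_iff)

definition restrict_keys :: "(nat \<Rightarrow>\<^sub>0 nat) \<Rightarrow> nat set \<Rightarrow> nat \<Rightarrow>\<^sub>0 nat" where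
  "restrict_keys a X = Poly_Mapping.mapp (\<lambda>k e. if k \<in> X then e else 0) a"

lemma lookup_restrict_keys:
  "Poly_Mapping.lookup (restrict_keys a X) k = (if k \<in> X then Poly_Mapping.lookup a k else 0)"
  by (auto simp: restrict_keys_def lookup_mapp when_def in_keys_iff)

lemma keys_restrict_keys [simp]: "Poly_Mapping.keys (restrict_keys a X) = Poly_Mapping.keys a \<inter> X"
  by (auto simp: in_keys_iff lookup_restrict_keys split: if_splits)

lemma mdvd_restrict_keys: "mdvd (restrict_keys a X) a"
  by (simp add: mdvd_def lookup_restrict_keys)

lemma keys_gen_idealE:
  assumes "p \<in> gen_ideal V S" and "g \<in> Poly_Mapping.keys p"
  obtains s h c where "s \<in> S" "h \<in> Poly_Mapping.keys s" "Poly_Mapping.keys c \<subseteq> V" "g = c + h"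
proof -
  from assms(1) obtain c T where p: "p = (\<Sum>s\<in>T. c s * s)" and "T \<subseteq> S" "\<forall>s\<in>T. c s \<in> polys V"
    unfolding gen_ideal_def by blast
  from assms(2) obtain s where "s \<in> T" "g \<in> Poly_Mapping.keys (c s * s)"
    using keys_sum[of "\<lambda>s. c s * s" T] by (auto simp: p)
  with keys_mult obtain a h where "g = a + h" "a \<in> Poly_Mapping.keys (c s)" "h \<in> Poly_Mapping.keys s"
    by blast
  with \<open>T \<subseteq> S\<close> \<open>\<forall>s\<in>T. c s \<in> polys V\<close> \<open>s \<in> T\<close> show ?thesis
    using that unfolding polys_def by blast
qed

lemma xmon_in_gen_idealI:
  assumes "xmon b \<in> S" "mdvd b a" "Poly_Mapping.keys a \<subseteq> V"
  shows "(xmon a :: 'k::field mpoly) \<in> gen_ideal V S"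
proof -
  have a: "a = (a - b) + b"
    using assms(2) by (auto intro!: poly_mapping_eqI simp: lookup_add lookup_minus mdvd_def)
  have "Poly_Mapping.keys (a - b) \<subseteq> V"
    using assms(3) by (auto simp: in_keys_iff lookup_minus)
  then have "(xmon (a - b) :: 'k mpoly) \<in> polys V"
    by (simp add: polys_def)
  moreover have "(xmon a :: 'k mpoly) = (\<Sum>s\<in>{xmon b}. xmon (a - b) * s)"
    by (subst a) (simp add: xmon_mult)
  ultimately show ?thesis
    using assms(1) unfolding gen_ideal_def by fastforce
qed

lemma xmon_in_gen_ideal_xmon_iff:
  assumes "\<forall>b\<in>S. Poly_Mapping.keys b \<subseteq> V"
  shows "(xmon a :: 'k::field mpoly) \<in> gen_ideal V (xmon ` S)
    \<longleftrightarrow> Poly_Mapping.keys a \<subseteq> V \<and> (\<exists>b\<in>S. mdvd b a)"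
proof
  assume "(xmon a :: 'k mpoly) \<in> gen_ideal V (xmon ` S)"
  then obtain b c where "b \<in> S" "Poly_Mapping.keys c \<subseteq> V" "a = c + b"
    by (auto elim: keys_gen_idealE)
  with assms show "Poly_Mapping.keys a \<subseteq> V \<and> (\<exists>b\<in>S. mdvd b a)"
    by (auto simp: keys_add_nat intro!: bexI[of _ b] mdvd_add_left)
qed (auto intro: xmon_in_gen_idealI)

lemma mingens_antichain: "a \<in> mingens I \<Longrightarrow> b \<in> mingens I \<Longrightarrow> mdvd a b \<Longrightarrow> a = b"
  by (simp add: mingens_def)

lemma mingens_gen_ideal_antichain:
  assumes anti: "\<And>b c. b \<in> S \<Longrightarrow> c \<in> S \<Longrightarrow> mdvd b c \<Longrightarrow> b = c"
    and keys: "\<forall>b\<in>S. Poly_Mapping.keys b \<subseteq> V"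
  shows "mingens (gen_ideal V (xmon ` S) :: 'k::field mpoly set) = S"
proof (intro set_eqI iffI)
  fix a assume "a \<in> mingens (gen_ideal V (xmon ` S) :: 'k mpoly set)"
  then obtain b where "b \<in> S" "mdvd b a"
    and "\<And>b'. Poly_Mapping.keys b' \<subseteq> V \<Longrightarrow> mdvd b b' \<Longrightarrow> mdvd b' a \<Longrightarrow> b' = a"
    unfolding mingens_def xmon_in_gen_ideal_xmon_iff[OF keys] by blast
  with keys show "a \<in> S"
    by force
next
  fix a assume "a \<in> S"
  with keys show "a \<in> mingens (gen_ideal V (xmon ` S) :: 'k mpoly set)"
    unfolding mingens_def xmon_in_gen_ideal_xmon_iff[OF keys]
    by (auto intro: mdvd_antisym bexI[of _ a] dest: anti[OF _ \<open>a \<in> S\<close>] mdvd_trans)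
qed

section \<open>Matroids and contraction\<close>

lemma basis_indep: "B \<in> bases Ind \<Longrightarrow> B \<in> Ind"
  by (simp add: bases_def)

lemma basis_maximal: "B \<in> bases Ind \<Longrightarrow> X \<in> Ind \<Longrightarrow> B \<subseteq> X \<Longrightarrow> X = B"
  by (simp add: bases_def)

definition hitting_set :: "'a set set \<Rightarrow> 'a set \<Rightarrow> bool" where
  "hitting_set H X \<longleftrightarrow> (\<forall>F\<in>H. X \<inter> F \<noteq> {})"

context
  fixes E :: "nat set" and Ind :: "nat set set"
  assumes M: "matroid E Ind"
begin

lemma matroid_indep_subset: "X \<in> Ind \<Longrightarrow> X \<subseteq> E"
  using M by (simp add: matroid_def)

lemma matroid_indep_finite: "X \<in> Ind \<Longrightarrow> finite X"
  using M matroid_indep_subset by (meson finite_subset matroid_def)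

lemma matroid_indep_mono: "X \<in> Ind \<Longrightarrow> Y \<subseteq> X \<Longrightarrow> Y \<in> Ind"
  using M by (simp add: matroid_def)

lemma matroid_augment:
  "X \<in> Ind \<Longrightarrow> Y \<in> Ind \<Longrightarrow> card X < card Y \<Longrightarrow> \<exists>y\<in>Y - X. insert y X \<in> Ind"
  using M by (simp add: matroid_def)

lemma matroid_finite_Ind: "finite Ind"
proof (rule finite_subset)
  show "Ind \<subseteq> Pow E" "finite (Pow E)"
    using M matroid_indep_subset by (auto simp: matroid_def)
qed

lemma matroid_bases_nonempty: "bases Ind \<noteq> {}"
proof -
  have "{} \<in> Ind"
    using M by (simp add: matroid_def)
  then show ?thesis
    using finite_has_maximal[OF matroid_finite_Ind] by (auto simp: bases_def)
qed

lemma card_le_basis: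
  assumes B: "B \<in> bases Ind" and Y: "Y \<in> Ind"
  shows "card Y \<le> card B"
proof (rule ccontr)
  assume "\<not> card Y \<le> card B"
  moreover have "B \<in> Ind"
    using B by (simp add: bases_def)
  ultimately obtain y where "y \<in> Y - B" "insert y B \<in> Ind"
    using matroid_augment Y by (meson not_le)
  with B show False
    by (auto simp: bases_def)
qed

lemma exists_basis_between:
  assumes A: "A \<in> Ind" and B: "B \<in> bases Ind"
  shows "\<exists>B'\<in>bases Ind. A \<subseteq> B' \<and> B' \<subseteq> A \<union> B"
proof -
  define between where "between = {Z \<in> Ind. A \<subseteq> Z \<and> Z \<subseteq> A \<union> B}"
  have "finite between" "between \<noteq> {}"
    using matroid_finite_Ind A by (auto simp: between_def)
  then obtain Z where Z: "Z \<in> between" and Zmax: "\<forall>Y\<in>between. Z \<subseteq> Y \<longrightarrow> Y = Z"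
    by (metis finite_has_maximal)
  have "card B \<le> card Z"
  proof (rule ccontr)
    assume "\<not> card B \<le> card Z"
    moreover have "B \<in> Ind" "Z \<in> Ind"
      using B Z by (simp_all add: bases_def between_def)
    ultimately obtain y where y: "y \<in> B - Z" "insert y Z \<in> Ind"
      using matroid_augment by (meson not_le)
    with Z have "insert y Z \<in> between"
      by (auto simp: between_def)
    with Zmax y show False
      by blast
  qed
  have "Y = Z" if "Y \<in> Ind" "Z \<subseteq> Y" for Y
  proof -
    have "card Y \<le> card Z"
      using card_le_basis[OF B \<open>Y \<in> Ind\<close>] \<open>card B \<le> card Z\<close> by simp
    then show ?thesis
      using card_seteq[OF matroid_indep_finite \<open>Z \<subseteq> Y\<close>] \<open>Y \<in> Ind\<close> by simp
  qed
  with Z show ?thesis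
    by (auto simp: bases_def between_def)
qed

lemma matroid_contr:
  assumes A: "A \<in> Ind"
  shows "matroid (contr_ground E A) (contr_indep E Ind A)"
proof -
  have augment: "\<forall>X\<in>contr_indep E Ind A. \<forall>Y\<in>contr_indep E Ind A.
    card X < card Y \<longrightarrow> (\<exists>y\<in>Y - X. insert y X \<in> contr_indep E Ind A)"
  proof (intro ballI impI)
    fix X Y assume X: "X \<in> contr_indep E Ind A" and Y: "Y \<in> contr_indep E Ind A"
      and "card X < card Y"
    have XA: "X \<union> A \<in> Ind" "X \<inter> A = {}" and YA: "Y \<union> A \<in> Ind" "Y \<inter> A = {}"
      using X Y by (auto simp: contr_indep_def)
    have "finite (X \<union> A)" "finite (Y \<union> A)"
      using XA YA matroid_indep_finite by blast+
    then have "card (X \<union> A) < card (Y \<union> A)"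
      using XA YA \<open>card X < card Y\<close> by (simp add: card_Un_disjoint)
    then obtain y where "y \<in> (Y \<union> A) - (X \<union> A)" "insert y (X \<union> A) \<in> Ind"
      using matroid_augment[OF XA(1) YA(1)] by blast
    with X Y show "\<exists>y\<in>Y - X. insert y X \<in> contr_indep E Ind A"
      by (auto simp: contr_indep_def)
  qed
  have mono: "\<forall>X Y. X \<in> contr_indep E Ind A \<and> Y \<subseteq> X \<longrightarrow> Y \<in> contr_indep E Ind A"
  proof (intro allI impI)
    fix X Y assume "X \<in> contr_indep E Ind A \<and> Y \<subseteq> X"
    then show "Y \<in> contr_indep E Ind A"
      using matroid_indep_mono[of "X \<union> A" "Y \<union> A"] by (auto simp: contr_indep_def)
  qed
  have "{} \<in> contr_indep E Ind A"
    using A matroid_indep_subset by (auto simp: contr_indep_def)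
  moreover have "finite (E - A)"
    using M by (simp add: matroid_def)
  moreover have "\<forall>X\<in>contr_indep E Ind A. X \<subseteq> E - A"
    by (simp add: contr_indep_def)
  ultimately show ?thesis
    using augment mono unfolding matroid_def contr_ground_def by (intro conjI)
qed

lemma Un_in_bases_of_contr:
  assumes B: "B \<in> bases (contr_indep E Ind A)"
  shows "B \<union> A \<in> bases Ind"
  unfolding bases_def
proof (intro CollectI conjI ballI impI)
  have B': "B \<in> contr_indep E Ind A"
    using B by (rule basis_indep)
  then show "B \<union> A \<in> Ind"
    by (simp add: contr_indep_def)
  fix Y assume Y: "Y \<in> Ind" "B \<union> A \<subseteq> Y"
  then have "Y - A \<in> contr_indep E Ind A"
    using matroid_indep_subset by (auto simp: contr_indep_def Un_absorb2)
  moreover have "B \<subseteq> Y - A"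
    using B' Y by (auto simp: contr_indep_def)
  ultimately have "Y - A = B"
    by (rule basis_maximal[OF B])
  with Y show "Y = B \<union> A"
    by auto
qed

lemma Diff_in_bases_contr:
  assumes B: "B \<in> bases Ind" and A: "A \<subseteq> B"
  shows "B - A \<in> bases (contr_indep E Ind A)"
  unfolding bases_def
proof (intro CollectI conjI ballI impI)
  have "B \<in> Ind"
    using B by (rule basis_indep)
  then show "B - A \<in> contr_indep E Ind A"
    using A matroid_indep_subset by (auto simp: contr_indep_def Un_absorb2)
  fix X assume X: "X \<in> contr_indep E Ind A" "B - A \<subseteq> X"
  then have "X \<union> A \<in> Ind" "B \<subseteq> X \<union> A"
    by (auto simp: contr_indep_def)
  then have "X \<union> A = B"
    by (rule basis_maximal[OF B])
  with X show "X = B - A"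
    by (auto simp: contr_indep_def)
qed

lemma hitting_set_bases_contr_iff:
  assumes A: "A \<in> Ind"
  shows "hitting_set (bases (contr_indep E Ind A)) X \<longleftrightarrow> hitting_set (bases Ind) (X - A)"
proof
  assume hit: "hitting_set (bases (contr_indep E Ind A)) X"
  show "hitting_set (bases Ind) (X - A)"
    unfolding hitting_set_def
  proof
    fix B assume "B \<in> bases Ind"
    then obtain B' where B': "B' \<in> bases Ind" "A \<subseteq> B'" "B' \<subseteq> A \<union> B"
      using exists_basis_between[OF A] by blast
    then have "X \<inter> (B' - A) \<noteq> {}"
      using hit Diff_in_bases_contr by (auto simp: hitting_set_def)
    with B' show "(X - A) \<inter> B \<noteq> {}"
      by blast
  qed
next
  assume hit: "hitting_set (bases Ind) (X - A)"
  show "hitting_set (bases (contr_indep E Ind A)) X"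
    unfolding hitting_set_def
  proof
    fix B assume "B \<in> bases (contr_indep E Ind A)"
    then have "(X - A) \<inter> (B \<union> A) \<noteq> {}"
      using hit Un_in_bases_of_contr by (auto simp: hitting_set_def)
    then show "X \<inter> B \<noteq> {}"
      by blast
  qed
qed

end

section \<open>Minimal generators of the matroid ideals\<close>

lemma keys_gen_ideal_xvar:
  assumes "s \<in> gen_ideal E (xvar ` F :: 'k::field mpoly set)" "F \<subseteq> E" "h \<in> Poly_Mapping.keys s"
  shows "Poly_Mapping.keys h \<subseteq> E \<and> Poly_Mapping.keys h \<inter> F \<noteq> {}"
proof -
  obtain t g c where "t \<in> (xvar ` F :: 'k mpoly set)" "g \<in> Poly_Mapping.keys t" "Poly_Mapping.keys c \<subseteq> E" "h = c + g"
    using keys_gen_idealE[OF assms(1,3)] .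
  moreover from this obtain i where "i \<in> F" "g = Poly_Mapping.single i 1"
    by (auto simp: xvar_def)
  ultimately show ?thesis
    using assms(2) by (auto simp: keys_add_nat)
qed

lemma xmon_in_Jideal_iff:
  assumes M: "matroid E Ind" and En: "E \<subseteq> {1..n}"
  shows "(xmon a :: 'k::field mpoly) \<in> Jideal n E Ind
    \<longleftrightarrow> Poly_Mapping.keys a \<subseteq> {1..n} \<and> hitting_set (bases Ind) (Poly_Mapping.keys a)"
proof
  assume "(xmon a :: 'k mpoly) \<in> Jideal n E Ind"
  then obtain s h c where s: "s \<in> (\<Inter>F\<in>bases Ind. gen_ideal E (xvar ` F :: 'k mpoly set))"
    and h: "h \<in> Poly_Mapping.keys s" and c: "Poly_Mapping.keys c \<subseteq> {1..n}" and a: "a = c + h"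
    unfolding Jideal_def by (auto elim: keys_gen_idealE[of _ _ _ a])
  have hit: "Poly_Mapping.keys h \<subseteq> E \<and> Poly_Mapping.keys h \<inter> F \<noteq> {}" if "F \<in> bases Ind" for F
    using keys_gen_ideal_xvar[OF _ _ h] s that matroid_indep_subset[OF M basis_indep] by blast
  \<comment> \<open>Without bases J would be the whole ring; any basis bounds the support of h.\<close>
  obtain F0 where "F0 \<in> bases Ind"
    using matroid_bases_nonempty[OF M] by blast
  with hit have "Poly_Mapping.keys h \<subseteq> E"
    by blast
  with En c a have "Poly_Mapping.keys a \<subseteq> {1..n}"
    by (auto simp: keys_add_nat)
  moreover have "hitting_set (bases Ind) (Poly_Mapping.keys a)"
    unfolding hitting_set_def
  proof
    fix F assume "F \<in> bases Ind"
    with hit a show "Poly_Mapping.keys a \<inter> F \<noteq> {}"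
      by (auto simp: keys_add_nat)
  qed
  ultimately show "Poly_Mapping.keys a \<subseteq> {1..n} \<and> hitting_set (bases Ind) (Poly_Mapping.keys a)" ..
next
  assume a: "Poly_Mapping.keys a \<subseteq> {1..n} \<and> hitting_set (bases Ind) (Poly_Mapping.keys a)"
  have "(xmon (restrict_keys a E) :: 'k mpoly) \<in> gen_ideal E (xvar ` F)" if F: "F \<in> bases Ind" for F
  proof -
    obtain i where i: "i \<in> Poly_Mapping.keys a" "i \<in> F"
      using a F by (auto simp: hitting_set_def)
    have "i \<in> E"
      using i(2) matroid_indep_subset[OF M basis_indep[OF F]] by blast
    from i(2) have "xmon (Poly_Mapping.single i 1) \<in> (xvar ` F :: 'k mpoly set)"
      by (simp add: xvar_def)
    moreover from i(1) \<open>i \<in> E\<close> have "mdvd (Poly_Mapping.single i 1) (restrict_keys a E)"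
      unfolding mdvd_single_1_iff by simp
    ultimately show ?thesis
      by (rule xmon_in_gen_idealI) simp
  qed
  then have "(xmon (restrict_keys a E) :: 'k mpoly) \<in> (\<Inter>F\<in>bases Ind. gen_ideal E (xvar ` F))"
    by blast
  then show "(xmon a :: 'k mpoly) \<in> Jideal n E Ind"
    unfolding Jideal_def using xmon_in_gen_idealI[OF _ mdvd_restrict_keys] a by blast
qed

(* I' arises from I by setting the variables x_i, i \<in> A, to 1. *)
lemma mingens_support_Diff:
  fixes I I' :: "'k::field mpoly set"
  assumes I: "\<And>a. xmon a \<in> I \<longleftrightarrow> Poly_Mapping.keys a \<subseteq> V \<and> P (Poly_Mapping.keys a)"
    and I': "\<And>a. xmon a \<in> I' \<longleftrightarrow> Poly_Mapping.keys a \<subseteq> V \<and> P (Poly_Mapping.keys a - A)"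
  shows "mingens I' = {N \<in> mingens I. Poly_Mapping.keys N \<inter> A = {}}"
proof (intro set_eqI iffI)
  fix a assume a: "a \<in> mingens I'"
  have "xmon (restrict_keys a (- A)) \<in> I'"
    using a I' by (auto simp: mingens_def Diff_eq Int_assoc)
  then have "restrict_keys a (- A) = a"
    using a mdvd_restrict_keys by (auto simp: mingens_def)
  then have disj: "Poly_Mapping.keys a \<inter> A = {}"
    using keys_restrict_keys[of a "- A"] by auto
  have "b = a" if "xmon b \<in> I" "mdvd b a" for b
  proof -
    have "Poly_Mapping.keys b \<inter> A = {}"
      using keys_subset_of_mdvd[OF \<open>mdvd b a\<close>] disj by blast
    then show ?thesis
      using a that I I' by (auto simp: mingens_def Diff_triv)
  qed
  with a disj I I' show "a \<in> {N \<in> mingens I. Poly_Mapping.keys N \<inter> A = {}}"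
    by (auto simp: mingens_def Diff_triv)
next
  fix a assume a: "a \<in> {N \<in> mingens I. Poly_Mapping.keys N \<inter> A = {}}"
  have "b = a" if "xmon b \<in> I'" "mdvd b a" for b
  proof -
    have "Poly_Mapping.keys b \<inter> A = {}"
      using keys_subset_of_mdvd[OF \<open>mdvd b a\<close>] a by blast
    then show ?thesis
      using a that I I' by (auto simp: mingens_def Diff_triv)
  qed
  with a I I' show "a \<in> mingens I'"
    by (auto simp: mingens_def Diff_triv)
qed

lemma mingens_Jideal_contr:
  assumes M: "matroid E Ind" and En: "E \<subseteq> {1..n}" and A: "A \<in> Ind"
  shows "mingens (Jideal n (contr_ground E A) (contr_indep E Ind A) :: 'k::field mpoly set)
    = {N \<in> mingens (Jideal n E Ind :: 'k mpoly set). Poly_Mapping.keys N \<inter> A = {}}"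
proof (rule mingens_support_Diff)
  show "(xmon a :: 'k mpoly) \<in> Jideal n E Ind
    \<longleftrightarrow> Poly_Mapping.keys a \<subseteq> {1..n} \<and> hitting_set (bases Ind) (Poly_Mapping.keys a)" for a
    using M En by (rule xmon_in_Jideal_iff)
  have "contr_ground E A \<subseteq> {1..n}"
    using En by (auto simp: contr_ground_def)
  then show "(xmon a :: 'k mpoly) \<in> Jideal n (contr_ground E A) (contr_indep E Ind A)
    \<longleftrightarrow> Poly_Mapping.keys a \<subseteq> {1..n} \<and> hitting_set (bases Ind) (Poly_Mapping.keys a - A)" for a
    using xmon_in_Jideal_iff[OF matroid_contr[OF M A]] hitting_set_bases_contr_iff[OF M A] by blast
qed

theorem corollary2p19:
  fixes n :: nat and E :: "nat set" and Ind :: "nat set set" and v :: nat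
  assumes "matroid E Ind" and "E \<subseteq> {1..n}" and "{v} \<in> Ind"
  defines "J \<equiv> (Jideal n E Ind :: 'k::field mpoly set)"
  defines "Jv \<equiv> (Jideal n (contr_ground E {v}) (contr_indep E Ind {v}) :: 'k mpoly set)"
  defines "Jdiv \<equiv> gen_ideal {1..n} (xmon ` (mingens J - mingens Jv)) :: 'k mpoly set"
  shows "mingens Jv = {N \<in> mingens J. Poly_Mapping.lookup N v = 0}
     \<and> mingens Jdiv = {N \<in> mingens J. Poly_Mapping.lookup N v \<noteq> 0}
     \<and> (\<forall>A\<in>Ind. mingens (Jideal n (contr_ground E A) (contr_indep E Ind A) :: 'k mpoly set)
                 = {N \<in> mingens J. Poly_Mapping.keys N \<inter> A = {}})"
proof (intro conjI)
  show "\<forall>A\<in>Ind. mingens (Jideal n (contr_ground E A) (contr_indep E Ind A) :: 'k mpoly set)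
                 = {N \<in> mingens J. Poly_Mapping.keys N \<inter> A = {}}"
    unfolding J_def using mingens_Jideal_contr[OF assms(1,2)] by blast
  then show Jv: "mingens Jv = {N \<in> mingens J. Poly_Mapping.lookup N v = 0}"
    using assms(3) by (auto simp: Jv_def in_keys_iff)
  have "\<forall>N\<in>mingens J. Poly_Mapping.keys N \<subseteq> {1..n}"
    using xmon_in_Jideal_iff[OF assms(1,2)] by (auto simp: J_def mingens_def)
  then have "mingens Jdiv = mingens J - mingens Jv"
    unfolding Jdiv_def by (intro mingens_gen_ideal_antichain) (auto dest: mingens_antichain)
  with Jv show "mingens Jdiv = {N \<in> mingens J. Poly_Mapping.lookup N v \<noteq> 0}"
    by auto
qed

end
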